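(* Let $G$ be an embedded graph and let $\tilde G$ be the embedded graph obtained by subdividing every edge $e$ of $G$ exactly once by a new vertex $\tilde e$, placed on the curve of $e$ between one endpoint of $e$ and the first crossing point of $e$ in that direction (so that the resulting edge from that endpoint to $\tilde e$ is uncrossed); let $D(\tilde G)=\{\tilde e: e\in E(G)\}$. If $(A,X,B)$ is a co-separating triple of $(\Lambda(\tilde G),\tilde G)$ with $X\cap V(\tilde G)\subseteq D(\tilde G)$, then the set $\{e\in E(G):\tilde e\in X\}$ is an edge cut of $G$ (its removal disconnects $G$).
   Context: Graphs may have parallel edges. A drawing of a graph $G$ maps the vertices to distinct points of the plane and each edge to a curve (a homeomorphic image of $[0,1]$) joining the images of its endpoints whose interior contains no vertex. A crossing is a point interior to two distinct edges; no third edge passes through it, and the two edges cross transversally there. An embedded graph is a graph together with such a drawing. Its planarization $H^\times$ is the plane graph obtained by inserting a dummy-vertex at every crossing point; for an edge $e$, $e^\times$ denotes the walk in $H^\times$ from one endpoint of $e$ to the other through the crossing points on $e$ in order, and $V(e^\times)$ its vertex set. $\Lambda(H)$ is obtained from $H^\times$ by inserting inside each face of $H^\times$ a new face-vertex adjacent to all vertices of $H^\times$ on the boundary of that face. A co-separating triple of $(\Lambda(H),H)$ is a partition $(A,X,B)$ of $V(\Lambda(H))$ such that: (C1) each of $A,X,B$ contains at least one vertex of $H$; (C2) no edge of $\Lambda(H)$ has one endpoint in $A$ and the other in $B$; (C3) for every edge $e\in E(H)$, either both endpoints of $e$ lie in $X$, or $V(e^\times)\subseteq A\cup X$, or $V(e^\times)\subseteq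 B\cup X$. *)

theory Defs
  imports "HOL-Analysis.Analysis"
begin

text \<open>Embedded graphs: vertices are identified with their (distinct) images in the plane
  (= complex numbers); each edge e is drawn as an arc g e from pathstart (g e) to pathfinish (g e).\<close>

definition edge_int :: "(real \<Rightarrow> complex) \<Rightarrow> complex set" where
  "edge_int \<gamma> = \<gamma> ` {0<..<1}"

definition transversal_at :: "(real \<Rightarrow> complex) \<Rightarrow> (real \<Rightarrow> complex) \<Rightarrow> complex \<Rightarrow> bool" where
  "transversal_at \<gamma> \<delta> p \<longleftrightarrow>
     (\<exists>U h k. open U \<and> p \<in> U \<and> homeomorphism U (ball 0 1) h k \<and> h p = 0 \<and>
        h ` (path_image \<gamma> \<inter> U) = ball 0 1 \<inter> {z. Im z = 0} \<and>
        h ` (path_image \<delta> \<inter> U) = ball 0 1 \<inter> {z. Re z = 0})"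

definition crossings :: "'e set \<Rightarrow> ('e \<Rightarrow> real \<Rightarrow> complex) \<Rightarrow> complex set" where
  "crossings E g = {p. \<exists>e\<in>E. \<exists>f\<in>E. e \<noteq> f \<and> p \<in> edge_int (g e) \<and> p \<in> edge_int (g f)}"

definition embedded_graph :: "complex set \<Rightarrow> 'e set \<Rightarrow> ('e \<Rightarrow> real \<Rightarrow> complex) \<Rightarrow> bool" where
  "embedded_graph V E g \<longleftrightarrow>
     finite V \<and> finite E \<and>
     (\<forall>e\<in>E. arc (g e) \<and> pathstart (g e) \<in> V \<and> pathfinish (g e) \<in> V \<and> edge_int (g e) \<inter> V = {}) \<and>
     finite (crossings E g) \<and>
     (\<forall>e\<in>E. \<forall>f\<in>E. \<forall>p. e \<noteq> f \<and> p \<in> edge_int (g e) \<and> p \<in> edge_int (g f) \<longrightarrow>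
        transversal_at (g e) (g f) p \<and> (\<forall>h\<in>E. p \<in> edge_int (g h) \<longrightarrow> h = e \<or> h = f))"

definition planar_vertices :: "complex set \<Rightarrow> 'e set \<Rightarrow> ('e \<Rightarrow> real \<Rightarrow> complex) \<Rightarrow> complex set" where
  "planar_vertices V E g = V \<union> crossings E g"

definition planar_adj :: "complex set \<Rightarrow> 'e set \<Rightarrow> ('e \<Rightarrow> real \<Rightarrow> complex) \<Rightarrow> complex \<Rightarrow> complex \<Rightarrow> bool" where
  "planar_adj V E g p q \<longleftrightarrow>
     (\<exists>e\<in>E. \<exists>s t. 0 \<le> s \<and> s < t \<and> t \<le> 1 \<and> {p, q} = {g e s, g e t} \<and>
        g e s \<in> planar_vertices V E g \<and> g e t \<in> planar_vertices V E g \<and>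
        (\<forall>r. s < r \<and> r < t \<longrightarrow> g e r \<notin> planar_vertices V E g))"

definition drawing :: "'e set \<Rightarrow> ('e \<Rightarrow> real \<Rightarrow> complex) \<Rightarrow> complex set" where
  "drawing E g = (\<Union>e\<in>E. path_image (g e))"

definition faces :: "'e set \<Rightarrow> ('e \<Rightarrow> real \<Rightarrow> complex) \<Rightarrow> complex set set" where
  "faces E g = components (- drawing E g)"

datatype lvert = PtV complex | FaceV "complex set"

definition lam_vertices :: "complex set \<Rightarrow> 'e set \<Rightarrow> ('e \<Rightarrow> real \<Rightarrow> complex) \<Rightarrow> lvert set" where
  "lam_vertices V E g = PtV ` planar_vertices V E g \<union> FaceV ` faces E g"

definition lam_adj :: "complex set \<Rightarrow> 'e set \<Rightarrow> ('e \<Rightarrow> real \<Rightarrow> complex) \<Rightarrow> lvert \<Rightarrow> lvert \<Rightarrow> bool" where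
  "lam_adj V E g x y \<longleftrightarrow>
     (\<exists>p q. x = PtV p \<and> y = PtV q \<and> planar_adj V E g p q) \<or>
     (\<exists>F p. F \<in> faces E g \<and> p \<in> planar_vertices V E g \<and> p \<in> frontier F \<and>
        {x, y} = {FaceV F, PtV p})"

definition walk_vertices :: "complex set \<Rightarrow> 'e set \<Rightarrow> ('e \<Rightarrow> real \<Rightarrow> complex) \<Rightarrow> 'e \<Rightarrow> complex set" where
  "walk_vertices V E g e = planar_vertices V E g \<inter> path_image (g e)"

definition co_separating ::
  "complex set \<Rightarrow> 'e set \<Rightarrow> ('e \<Rightarrow> real \<Rightarrow> complex) \<Rightarrow> lvert set \<Rightarrow> lvert set \<Rightarrow> lvert set \<Rightarrow> bool" where
  "co_separating V E g A X B \<longleftrightarrow>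
     A \<inter> X = {} \<and> A \<inter> B = {} \<and> X \<inter> B = {} \<and> A \<union> X \<union> B = lam_vertices V E g \<and>
     A \<inter> PtV ` V \<noteq> {} \<and> X \<inter> PtV ` V \<noteq> {} \<and> B \<inter> PtV ` V \<noteq> {} \<and>
     (\<forall>x y. lam_adj V E g x y \<longrightarrow> \<not> (x \<in> A \<and> y \<in> B) \<and> \<not> (x \<in> B \<and> y \<in> A)) \<and>
     (\<forall>e\<in>E. (PtV (pathstart (g e)) \<in> X \<and> PtV (pathfinish (g e)) \<in> X) \<or>
             PtV ` walk_vertices V E g e \<subseteq> A \<union> X \<or>
             PtV ` walk_vertices V E g e \<subseteq> B \<union> X)"

definition valid_subdivision :: "'e set \<Rightarrow> ('e \<Rightarrow> real \<Rightarrow> complex) \<Rightarrow> ('e \<Rightarrow> real) \<Rightarrow> bool" where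
  "valid_subdivision E g t \<longleftrightarrow>
     (\<forall>e\<in>E. 0 < t e \<and> t e < 1 \<and>
        (g e ` {0..t e} \<inter> crossings E g = {} \<or> g e ` {t e..1} \<inter> crossings E g = {}))"

definition sub_vertices :: "complex set \<Rightarrow> 'e set \<Rightarrow> ('e \<Rightarrow> real \<Rightarrow> complex) \<Rightarrow> ('e \<Rightarrow> real) \<Rightarrow> complex set" where
  "sub_vertices V E g t = V \<union> (\<lambda>e. g e (t e)) ` E"

definition sub_edges :: "'e set \<Rightarrow> ('e \<times> bool) set" where
  "sub_edges E = E \<times> UNIV"

definition sub_curves :: "('e \<Rightarrow> real \<Rightarrow> complex) \<Rightarrow> ('e \<Rightarrow> real) \<Rightarrow> 'e \<times> bool \<Rightarrow> real \<Rightarrow> complex" where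
  "sub_curves g t = (\<lambda>(e, b). if b then subpath 0 (t e) (g e) else subpath (t e) 1 (g e))"

definition edge_cut :: "complex set \<Rightarrow> 'e set \<Rightarrow> ('e \<Rightarrow> real \<Rightarrow> complex) \<Rightarrow> 'e set \<Rightarrow> bool" where
  "edge_cut V E g F \<longleftrightarrow> F \<subseteq> E \<and>
     (\<exists>u\<in>V. \<exists>v\<in>V. \<not> (\<lambda>x y. \<exists>e\<in>E - F. {x, y} = {pathstart (g e), pathfinish (g e)})\<^sup>*\<^sup>* u v)"

end

theory Submission
  imports Defs
begin

text \<open>A vertex of \<open>G\<close> is never a subdivision vertex, since subdivision vertices lie in the
  interior of edges. Hence no vertex of \<open>G\<close> is in \<open>X\<close>, and an edge \<open>e\<close> whose subdivision
  vertex avoids \<open>X\<close> has both halves with no endpoint in \<open>X\<close>; by (C3) each half, and so the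
  whole of \<open>e\<close>, lies on a single side \<open>A\<close> or \<open>B\<close>. So the edges outside the proposed cut
  never join \<open>A\<close> to \<open>B\<close>, while by (C1) both sides contain a vertex of \<open>G\<close>.\<close>

lemma co_separating_edge_side:
  assumes sep: "co_separating V E g A X B" and e: "e \<in> E"
    and ends: "pathstart (g e) \<in> V" "pathfinish (g e) \<in> V"
    and not_X: "PtV (pathstart (g e)) \<notin> X" "PtV (pathfinish (g e)) \<notin> X"
  shows "PtV (pathstart (g e)) \<in> A \<and> PtV (pathfinish (g e)) \<in> A \<or>
         PtV (pathstart (g e)) \<in> B \<and> PtV (pathfinish (g e)) \<in> B"
proof -
  have "pathstart (g e) \<in> walk_vertices V E g e" "pathfinish (g e) \<in> walk_vertices V E g e"
    using ends unfolding walk_vertices_def planar_vertices_def by auto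
  moreover have "PtV ` walk_vertices V E g e \<subseteq> A \<union> X \<or> PtV ` walk_vertices V E g e \<subseteq> B \<union> X"
    using sep e not_X unfolding co_separating_def by blast
  ultimately show ?thesis
    using not_X by blast
qed

locale co_separated_subdivision =
  fixes V :: "complex set" and E :: "'e set" and g :: "'e \<Rightarrow> real \<Rightarrow> complex"
    and t :: "'e \<Rightarrow> real" and A X B :: "lvert set"
  assumes embedded: "embedded_graph V E g"
    and subdivision: "valid_subdivision E g t"
    and co_sep: "co_separating (sub_vertices V E g t) (sub_edges E) (sub_curves g t) A X B"
    and X_subdivision_vertices: "X \<inter> PtV ` sub_vertices V E g t \<subseteq> PtV ` ((\<lambda>e. g e (t e)) ` E)"
begin

abbreviation subdivision_vertex :: "'e \<Rightarrow> complex" where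
  "subdivision_vertex e \<equiv> g e (t e)"

lemma sides_disjoint: "A \<inter> B = {}" "A \<inter> X = {}" "B \<inter> X = {}"
  using co_sep unfolding co_separating_def by auto

lemma sides_meet_vertices:
  "A \<inter> PtV ` sub_vertices V E g t \<noteq> {}" "B \<inter> PtV ` sub_vertices V E g t \<noteq> {}"
  using co_sep unfolding co_separating_def by auto

lemma edge_meets_V_only_at_ends:
  assumes "e \<in> E"
  shows "pathstart (g e) \<in> V" "pathfinish (g e) \<in> V" "edge_int (g e) \<inter> V = {}"
  using embedded assms by (simp_all add: embedded_graph_def)

lemma vertex_not_in_X:
  assumes "v \<in> V" shows "PtV v \<notin> X"
proof
  assume "PtV v \<in> X"
  with assms X_subdivision_vertices obtain e where e: "e \<in> E" "v = subdivision_vertex e"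
    unfolding sub_vertices_def by blast
  then have "v \<in> edge_int (g e)"
    using subdivision unfolding valid_subdivision_def edge_int_def by auto
  with edge_meets_V_only_at_ends(3)[OF e(1)] assms show False
    by blast
qed

lemma uncut_edge_side:
  assumes e: "e \<in> E" and mid: "PtV (subdivision_vertex e) \<notin> X"
  shows "PtV (pathstart (g e)) \<in> A \<and> PtV (pathfinish (g e)) \<in> A \<and> PtV (subdivision_vertex e) \<in> A \<or>
         PtV (pathstart (g e)) \<in> B \<and> PtV (pathfinish (g e)) \<in> B \<and> PtV (subdivision_vertex e) \<in> B"
proof -
  have ends: "pathstart (g e) \<in> sub_vertices V E g t" "pathfinish (g e) \<in> sub_vertices V E g t"
    "subdivision_vertex e \<in> sub_vertices V E g t"
    using edge_meets_V_only_at_ends(1,2)[OF e] e unfolding sub_vertices_def by auto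
  have halves: "(e, b) \<in> sub_edges E" for b
    using e unfolding sub_edges_def by simp
  have half_ends:
    "pathstart (sub_curves g t (e, True)) = pathstart (g e)"
    "pathfinish (sub_curves g t (e, True)) = subdivision_vertex e"
    "pathstart (sub_curves g t (e, False)) = subdivision_vertex e"
    "pathfinish (sub_curves g t (e, False)) = pathfinish (g e)"
    by (simp_all add: sub_curves_def subpath_def pathstart_def pathfinish_def)
  have ends_not_X: "PtV (pathstart (g e)) \<notin> X" "PtV (pathfinish (g e)) \<notin> X"
    using edge_meets_V_only_at_ends(1,2)[OF e] vertex_not_in_X by auto
  have "PtV (pathstart (g e)) \<in> A \<and> PtV (subdivision_vertex e) \<in> A \<or>
        PtV (pathstart (g e)) \<in> B \<and> PtV (subdivision_vertex e) \<in> B"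
    using co_separating_edge_side[OF co_sep halves[of True], unfolded half_ends] ends ends_not_X mid
    by blast
  moreover have "PtV (subdivision_vertex e) \<in> A \<and> PtV (pathfinish (g e)) \<in> A \<or>
        PtV (subdivision_vertex e) \<in> B \<and> PtV (pathfinish (g e)) \<in> B"
    using co_separating_edge_side[OF co_sep halves[of False], unfolded half_ends] ends ends_not_X mid
    by blast
  ultimately show ?thesis
    using sides_disjoint(1) by blast
qed

lemma side_contains_vertex:
  assumes S: "S = A \<or> S = B"
  shows "\<exists>v\<in>V. PtV v \<in> S"
proof -
  obtain w where w: "w \<in> sub_vertices V E g t" "PtV w \<in> S"
    using S sides_meet_vertices by blast
  show ?thesis
  proof (cases "w \<in> V")
    case False
    then obtain e where e: "e \<in> E" "w = subdivision_vertex e"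
      using w(1) unfolding sub_vertices_def by auto
    have "PtV w \<notin> X"
      using S w(2) sides_disjoint by blast
    with e have "PtV (pathstart (g e)) \<in> S"
      using uncut_edge_side[OF e(1)] w(2) S sides_disjoint(1) by auto
    then show ?thesis
      using edge_meets_V_only_at_ends(1)[OF e(1)] by blast
  qed (use w in blast)
qed

lemma uncut_reachable_stays_in_A:
  assumes "(\<lambda>x y. \<exists>e\<in>E - {e \<in> E. PtV (subdivision_vertex e) \<in> X}.
             {x, y} = {pathstart (g e), pathfinish (g e)})\<^sup>*\<^sup>* u v"
    and "PtV u \<in> A"
  shows "PtV v \<in> A"
  using assms
proof (induction rule: rtranclp_induct)
  case (step y z)
  then obtain e where "e \<in> E" "PtV (subdivision_vertex e) \<notin> X"
    "{y, z} = {pathstart (g e), pathfinish (g e)}"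
    by auto
  then show ?case
    using uncut_edge_side step.IH step.prems sides_disjoint by (auto simp: doubleton_eq_iff)
qed

theorem subdivision_cut_is_edge_cut: "edge_cut V E g {e \<in> E. PtV (subdivision_vertex e) \<in> X}"
proof -
  obtain u where "u \<in> V" "PtV u \<in> A"
    using side_contains_vertex by blast
  moreover obtain v where "v \<in> V" "PtV v \<in> B"
    using side_contains_vertex by blast
  ultimately show ?thesis
    unfolding edge_cut_def using uncut_reachable_stays_in_A sides_disjoint(1) by blast
qed

end

theorem mainTheorem6:
  fixes V :: "complex set" and E :: "'e set" and g :: "'e \<Rightarrow> real \<Rightarrow> complex"
    and t :: "'e \<Rightarrow> real" and A X B :: "lvert set"
  assumes "embedded_graph V E g"
    and "valid_subdivision E g t"
    and "co_separating (sub_vertices V E g t) (sub_edges E) (sub_curves g t) A X B"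
    and "X \<inter> PtV ` sub_vertices V E g t \<subseteq> PtV ` ((\<lambda>e. g e (t e)) ` E)"
  shows "edge_cut V E g {e \<in> E. PtV (g e (t e)) \<in> X}"
proof -
  interpret co_separated_subdivision V E g t A X B
    using assms by unfold_locales
  show ?thesis
    by (rule subdivision_cut_is_edge_cut)
qed

end
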